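(* Let $\epsilon<1/2$, $S\subseteq\{0,1\}^n$ and $f:S\to\{0,1\}$. If $f$ is $\epsilon$-approximated by functions $\{f_j\}_{j\in J}$ with $\mathsf{sumPI}(f_j)\le s$ for every $j\in J$, then $\mathsf{sumPI}(f)\le s/(1-2\epsilon)$.
   Context: $f$ is $\epsilon$-approximated by $\{f_j\}_{j\in J}$, $f_j:S\to\{0,1\}$, if there is a probability distribution $\alpha$ on $J$ such that for every $x\in S$, $\Pr_{j\sim\alpha}[f(x)=f_j(x)]\ge1-\epsilon$. For $g:S\to\{0,1\}$, with $p=\{p_x:x\in S\}$ ranging over families of probability distributions on $[n]$, $$\mathsf{sumPI}(g)=\min_{p}\ \max_{x,y\in S:\ g(x)\neq g(y)} \frac{1}{\sum_{i:\,x_i\neq y_i}\sqrt{p_x(i)p_y(i)}}.$$ *)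

theory Defs
  imports "HOL-Probability.Probability"
begin

text \<open>Points of {0,1}^n are boolean lists of length n; coordinates are indexed by {0..<n}.
  Boolean functions S -> {0,1} are total functions bool list => bool, only their values on S matter.\<close>

definition prob_family :: "nat \<Rightarrow> bool list set \<Rightarrow> (bool list \<Rightarrow> nat \<Rightarrow> real) \<Rightarrow> bool" where
  "prob_family n S p \<longleftrightarrow>
     (\<forall>x\<in>S. (\<forall>i<n. 0 \<le> p x i) \<and> (\<Sum>i<n. p x i) = 1)"

definition pair_cost :: "nat \<Rightarrow> (bool list \<Rightarrow> nat \<Rightarrow> real) \<Rightarrow> bool list \<Rightarrow> bool list \<Rightarrow> ereal" where
  "pair_cost n p x y =
     (let t = (\<Sum>i\<in>{i. i < n \<and> x ! i \<noteq> y ! i}. sqrt (p x i * p y i))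
      in if t = 0 then \<infinity> else ereal (1 / t))"

text \<open>sumPI(g) = min over p of max over x,y in S with g x ~= g y of pair_cost.
  The maximum over an empty set of pairs is taken to be 0.\<close>
definition sumPI :: "nat \<Rightarrow> bool list set \<Rightarrow> (bool list \<Rightarrow> bool) \<Rightarrow> ereal" where
  "sumPI n S g =
     (INF p \<in> {p. prob_family n S p}.
        Sup (insert 0 {pair_cost n p x y | x y. x \<in> S \<and> y \<in> S \<and> g x \<noteq> g y}))"

definition eps_approx :: "real \<Rightarrow> bool list set \<Rightarrow> (bool list \<Rightarrow> bool) \<Rightarrow> 'j set
    \<Rightarrow> ('j \<Rightarrow> bool list \<Rightarrow> bool) \<Rightarrow> bool" where
  "eps_approx eps S f J F \<longleftrightarrow>
     (\<exists>\<alpha> :: 'j pmf. set_pmf \<alpha> \<subseteq> J \<and>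
        (\<forall>x\<in>S. measure_pmf.prob \<alpha> {j. f x = F j x} \<ge> 1 - eps))"

end

theory Submission
  imports Defs
begin

text \<open>For every \<open>j\<close> choose a family \<open>P j\<close> whose objective for \<open>F j\<close> is below \<open>c\<close>,
  and average these families under \<open>\<alpha>\<close>. By Cauchy-Schwarz the overlap
  \<open>\<Sum>i. sqrt (p x i * p y i)\<close> (over the coordinates where \<open>x\<close> and \<open>y\<close> differ) is concave
  in \<open>p\<close>, so the overlap of the average dominates the average of the overlaps. If \<open>f x \<noteq> f y\<close>,
  then \<open>F j\<close> separates \<open>x\<close> and \<open>y\<close> with probability at least \<open>1 - 2 eps\<close>, and every
  separating \<open>j\<close> contributes an overlap of at least \<open>1 / c\<close>; hence the averaged family has
  overlap at least \<open>(1 - 2 eps) / c\<close> on every such pair.\<close>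

lemma integral_sqrt_mult_le:
  fixes a b :: "'a \<Rightarrow> real"
  assumes a: "integrable M a" "AE x in M. 0 \<le> a x"
    and b: "integrable M b" "AE x in M. 0 \<le> b x"
  shows "(\<integral>x. sqrt (a x * b x) \<partial>M) \<le> sqrt ((\<integral>x. a x \<partial>M) * (\<integral>x. b x \<partial>M))"
proof -
  define N where "N = (\<integral>\<^sup>+x. ennreal (sqrt (a x)) * ennreal (sqrt (b x)) \<partial>M)"
  have "N\<^sup>2 \<le> (\<integral>\<^sup>+x. ennreal (sqrt (a x)) ^ 2 \<partial>M) * (\<integral>\<^sup>+x. ennreal (sqrt (b x)) ^ 2 \<partial>M)"
    unfolding N_def using a b by (intro Cauchy_Schwarz_nn_integral) auto
  also have "\<dots> = (\<integral>\<^sup>+x. ennreal (a x) \<partial>M) * (\<integral>\<^sup>+x. ennreal (b x) \<partial>M)"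
    using a(2) b(2) by (intro arg_cong2[where f = "(*)"] nn_integral_cong_AE) (auto simp: ennreal_power)
  also have "\<dots> = ennreal ((\<integral>x. a x \<partial>M) * (\<integral>x. b x \<partial>M))"
    using a b by (simp add: nn_integral_eq_integral ennreal_mult integral_nonneg_AE)
  finally have N2: "N\<^sup>2 \<le> ennreal ((\<integral>x. a x \<partial>M) * (\<integral>x. b x \<partial>M))" .
  have "(\<integral>x. sqrt (a x * b x) \<partial>M) = enn2real (\<integral>\<^sup>+x. ennreal (sqrt (a x * b x)) \<partial>M)"
    using a b by (intro integral_eq_nn_integral) auto
  also have "\<dots> = enn2real N"
    unfolding N_def using a(2) b(2)
    by (intro arg_cong[where f = enn2real] nn_integral_cong_AE) (auto simp: real_sqrt_mult ennreal_mult)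
  also have "\<dots> \<le> sqrt ((\<integral>x. a x \<partial>M) * (\<integral>x. b x \<partial>M))"
  proof (rule real_le_rsqrt)
    have "enn2real N ^ 2 = enn2real (N\<^sup>2)" by (simp add: power2_eq_square enn2real_mult)
    also have "\<dots> \<le> (\<integral>x. a x \<partial>M) * (\<integral>x. b x \<partial>M)"
      using N2 a b by (intro enn2real_leI) (auto simp: integral_nonneg_AE)
    finally show "enn2real N ^ 2 \<le> (\<integral>x. a x \<partial>M) * (\<integral>x. b x \<partial>M)" .
  qed
  finally show ?thesis .
qed

lemma integrable_measure_pmf_bounded:
  fixes g :: "'a \<Rightarrow> real"
  assumes "\<And>j. j \<in> set_pmf \<alpha> \<Longrightarrow> \<bar>g j\<bar> \<le> B"
  shows "integrable (measure_pmf \<alpha>) g"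
  by (rule measure_pmf.integrable_const_bound[where B = B]) (use assms in \<open>auto simp: AE_measure_pmf_iff\<close>)

lemma (in prob_space) prob_Int_ge:
  assumes "A \<in> events" "B \<in> events"
  shows "prob A + prob B - 1 \<le> prob (A \<inter> B)"
  using finite_measure_Union'[of A "B - A"] finite_measure_Diff'[of B A] prob_le_1[of "A \<union> B"] assms
  by (simp add: Un_Diff_cancel Int_commute)

lemma prob_family_le_1:
  assumes "prob_family n S p" "x \<in> S" "i < n"
  shows "p x i \<le> 1"
proof -
  have "p x i \<le> (\<Sum>k<n. p x k)"
    using assms by (intro member_le_sum) (auto simp: prob_family_def)
  with assms show ?thesis by (simp add: prob_family_def)
qed

definition overlap :: "nat \<Rightarrow> (bool list \<Rightarrow> nat \<Rightarrow> real) \<Rightarrow> bool list \<Rightarrow> bool list \<Rightarrow> real" where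
  "overlap n p x y = (\<Sum>i\<in>{i. i < n \<and> x ! i \<noteq> y ! i}. sqrt (p x i * p y i))"

lemma overlap_nonneg:
  assumes "prob_family n S p" "x \<in> S" "y \<in> S"
  shows "0 \<le> overlap n p x y"
  using assms unfolding overlap_def prob_family_def by (auto intro!: sum_nonneg)

lemma pair_cost_le_iff:
  assumes "0 < c" "0 \<le> overlap n p x y"
  shows "pair_cost n p x y \<le> ereal c \<longleftrightarrow> 1 / c \<le> overlap n p x y"
  using assms unfolding pair_cost_def overlap_def[symmetric]
  by (auto simp: Let_def field_simps)

definition sumPI_objective :: "nat \<Rightarrow> bool list set \<Rightarrow> (bool list \<Rightarrow> bool)
    \<Rightarrow> (bool list \<Rightarrow> nat \<Rightarrow> real) \<Rightarrow> ereal" where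
  "sumPI_objective n S g p = Sup (insert 0 {pair_cost n p x y | x y. x \<in> S \<and> y \<in> S \<and> g x \<noteq> g y})"

lemma sumPI_eq_INF_objective:
  "sumPI n S g = (INF p \<in> {p. prob_family n S p}. sumPI_objective n S g p)"
  unfolding sumPI_def sumPI_objective_def ..

lemma sumPI_nonneg: "0 \<le> sumPI n S g"
  unfolding sumPI_eq_INF_objective sumPI_objective_def by (intro INF_greatest Sup_upper) simp

lemma sumPI_objective_le_iff:
  "sumPI_objective n S g p \<le> ereal c \<longleftrightarrow>
     0 \<le> c \<and> (\<forall>x\<in>S. \<forall>y\<in>S. g x \<noteq> g y \<longrightarrow> pair_cost n p x y \<le> ereal c)"
  unfolding sumPI_objective_def by (auto simp: Sup_le_iff)

lemma overlap_ge_if_sumPI_objective_le: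
  assumes "prob_family n S p" "sumPI_objective n S g p \<le> ereal c" "0 < c"
    and "x \<in> S" "y \<in> S" "g x \<noteq> g y"
  shows "1 / c \<le> overlap n p x y"
  using assms pair_cost_le_iff[OF \<open>0 < c\<close> overlap_nonneg] by (auto simp: sumPI_objective_le_iff)

definition mixture :: "'j pmf \<Rightarrow> ('j \<Rightarrow> bool list \<Rightarrow> nat \<Rightarrow> real) \<Rightarrow> bool list \<Rightarrow> nat \<Rightarrow> real" where
  "mixture \<alpha> P x i = measure_pmf.expectation \<alpha> (\<lambda>j. P j x i)"

context
  fixes \<alpha> :: "'j pmf" and P :: "'j \<Rightarrow> bool list \<Rightarrow> nat \<Rightarrow> real" and n S
  assumes P: "\<And>j. j \<in> set_pmf \<alpha> \<Longrightarrow> prob_family n S (P j)"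
begin

lemma integrable_component:
  assumes "x \<in> S" "i < n"
  shows "integrable (measure_pmf \<alpha>) (\<lambda>j. P j x i)"
  using P prob_family_le_1[OF P] assms
  by (intro integrable_measure_pmf_bounded[where B = 1]) (auto simp: prob_family_def)

lemma integrable_sqrt_component:
  assumes "x \<in> S" "y \<in> S" "i < n"
  shows "integrable (measure_pmf \<alpha>) (\<lambda>j. sqrt (P j x i * P j y i))"
  using P prob_family_le_1[OF P] assms
  by (intro integrable_measure_pmf_bounded[where B = 1]) (auto simp: prob_family_def mult_le_one)

lemma prob_family_mixture: "prob_family n S (mixture \<alpha> P)"
  unfolding prob_family_def
proof (intro ballI conjI allI impI)
  fix x i assume "x \<in> S" "i < n"
  then show "0 \<le> mixture \<alpha> P x i"
    unfolding mixture_def using P by (intro integral_nonneg_AE) (auto simp: AE_measure_pmf_iff prob_family_def)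
next
  fix x assume x: "x \<in> S"
  have "(\<Sum>i<n. mixture \<alpha> P x i) = measure_pmf.expectation \<alpha> (\<lambda>j. \<Sum>i<n. P j x i)"
    unfolding mixture_def using integrable_component[OF x] by (simp add: Bochner_Integration.integral_sum)
  also have "\<dots> = measure_pmf.expectation \<alpha> (\<lambda>j. 1)"
    using P x by (intro integral_cong_AE) (auto simp: AE_measure_pmf_iff prob_family_def)
  finally show "(\<Sum>i<n. mixture \<alpha> P x i) = 1" by simp
qed

lemma expectation_overlap_le_overlap_mixture:
  assumes "x \<in> S" "y \<in> S"
  shows "measure_pmf.expectation \<alpha> (\<lambda>j. overlap n (P j) x y) \<le> overlap n (mixture \<alpha> P) x y"
proof -
  let ?D = "{i. i < n \<and> x ! i \<noteq> y ! i}"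
  have "measure_pmf.expectation \<alpha> (\<lambda>j. overlap n (P j) x y)
      = (\<Sum>i\<in>?D. measure_pmf.expectation \<alpha> (\<lambda>j. sqrt (P j x i * P j y i)))"
    unfolding overlap_def using integrable_sqrt_component assms
    by (intro Bochner_Integration.integral_sum) auto
  also have "\<dots> \<le> (\<Sum>i\<in>?D. sqrt (mixture \<alpha> P x i * mixture \<alpha> P y i))"
    unfolding mixture_def using integrable_component P assms
    by (intro sum_mono integral_sqrt_mult_le) (auto simp: AE_measure_pmf_iff prob_family_def)
  finally show ?thesis unfolding overlap_def .
qed

end

lemma sumPI_objective_mixture_le:
  assumes "eps < 1/2" "0 < c"
    and agree: "\<forall>x\<in>S. 1 - eps \<le> measure_pmf.prob \<alpha> {j. f x = F j x}"
    and P: "\<And>j. j \<in> set_pmf \<alpha> \<Longrightarrow> prob_family n S (P j)"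
    and cost: "\<And>j. j \<in> set_pmf \<alpha> \<Longrightarrow> sumPI_objective n S (F j) (P j) \<le> ereal c"
  shows "sumPI_objective n S f (mixture \<alpha> P) \<le> ereal (c / (1 - 2 * eps))"
proof -
  have margin: "0 < 1 - 2 * eps" using \<open>eps < 1/2\<close> by simp
  have "1 / (c / (1 - 2 * eps)) \<le> overlap n (mixture \<alpha> P) x y"
    if xy: "x \<in> S" "y \<in> S" "f x \<noteq> f y" for x y
  proof -
    let ?Q = "{j. F j x \<noteq> F j y}"
    have "1 - 2 * eps \<le> measure_pmf.prob \<alpha> ({j. f x = F j x} \<inter> {j. f y = F j y})"
      using measure_pmf.prob_Int_ge[of "{j. f x = F j x}" \<alpha> "{j. f y = F j y}", simplified]
        bspec[OF agree \<open>x \<in> S\<close>] bspec[OF agree \<open>y \<in> S\<close>] by linarith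
    also have "\<dots> \<le> measure_pmf.prob \<alpha> ?Q"
      using \<open>f x \<noteq> f y\<close> by (intro measure_pmf.finite_measure_mono) auto
    finally have "(1 - 2 * eps) / c \<le> measure_pmf.expectation \<alpha> (\<lambda>j. indicator ?Q j / c)"
      using \<open>0 < c\<close> by (simp add: divide_right_mono)
    also have "\<dots> \<le> measure_pmf.expectation \<alpha> (\<lambda>j. overlap n (P j) x y)"
    proof (intro integral_mono_AE)
      show "integrable (measure_pmf \<alpha>) (\<lambda>j. indicator ?Q j / c)"
        using \<open>0 < c\<close> by (intro integrable_measure_pmf_bounded[where B = "1 / c"]) (auto simp: indicator_def)
      show "integrable (measure_pmf \<alpha>) (\<lambda>j. overlap n (P j) x y)"
        unfolding overlap_def using integrable_sqrt_component[of \<alpha> n S P] P xy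
        by (intro Bochner_Integration.integrable_sum) auto
      show "AE j in measure_pmf \<alpha>. indicator ?Q j / c \<le> overlap n (P j) x y"
        unfolding AE_measure_pmf_iff
        using overlap_ge_if_sumPI_objective_le[OF P cost \<open>0 < c\<close>] overlap_nonneg[OF P] xy
        by (auto simp: indicator_def)
    qed
    also have "\<dots> \<le> overlap n (mixture \<alpha> P) x y"
      using expectation_overlap_le_overlap_mixture[of \<alpha> n S P, OF P] xy by blast
    finally show ?thesis by simp
  qed
  then show ?thesis
    using assms margin pair_cost_le_iff[of "c / (1 - 2 * eps)"] overlap_nonneg
      prob_family_mixture[of \<alpha> n S P, OF P]
    by (auto simp: sumPI_objective_le_iff)
qed

lemma sumPI_le_if_eps_approx_by_less:
  assumes "eps < 1/2" "0 < c" "eps_approx eps S f J F" "\<forall>j\<in>J. sumPI n S (F j) < ereal c"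
  shows "sumPI n S f \<le> ereal (c / (1 - 2 * eps))"
proof -
  obtain \<alpha> where "set_pmf \<alpha> \<subseteq> J"
    and agree: "\<forall>x\<in>S. 1 - eps \<le> measure_pmf.prob \<alpha> {j. f x = F j x}"
    using \<open>eps_approx eps S f J F\<close> unfolding eps_approx_def by blast
  then have "\<forall>j\<in>set_pmf \<alpha>. \<exists>p. prob_family n S p \<and> sumPI_objective n S (F j) p < ereal c"
    using assms(4) by (auto simp: sumPI_eq_INF_objective INF_less_iff)
  then obtain P where P: "\<And>j. j \<in> set_pmf \<alpha> \<Longrightarrow>
      prob_family n S (P j) \<and> sumPI_objective n S (F j) (P j) < ereal c"
    by metis
  have "sumPI n S f \<le> sumPI_objective n S f (mixture \<alpha> P)"
    unfolding sumPI_eq_INF_objective using P by (intro INF_lower) (simp add: prob_family_mixture)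
  also have "\<dots> \<le> ereal (c / (1 - 2 * eps))"
    using assms(1,2) agree P by (intro sumPI_objective_mixture_le) (auto intro: less_imp_le)
  finally show ?thesis .
qed

theorem mainTheorem8:
  fixes n :: nat and S :: "bool list set" and f :: "bool list \<Rightarrow> bool"
    and J :: "'j set" and F :: "'j \<Rightarrow> bool list \<Rightarrow> bool" and eps s :: real
  assumes "eps < 1/2"
    and "S \<subseteq> {x. length x = n}"
    and "eps_approx eps S f J F"
    and "\<forall>j\<in>J. sumPI n S (F j) \<le> ereal s"
  shows "sumPI n S f \<le> ereal (s / (1 - 2 * eps))"
proof (rule ereal_le_epsilon2)
  have margin: "0 < 1 - 2 * eps" using assms(1) by simp
  obtain j where "j \<in> J"
    using assms(3) set_pmf_not_empty unfolding eps_approx_def by (metis ex_in_conv subset_iff)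
  then have "0 \<le> s"
    using assms(4) sumPI_nonneg[of n S "F j"] by (metis ereal_less_eq(5) order_trans)
  fix e :: real assume "0 < e"
  let ?c = "s + e * (1 - 2 * eps)"
  have "sumPI n S f \<le> ereal (?c / (1 - 2 * eps))"
    using assms(4) \<open>0 \<le> s\<close> \<open>0 < e\<close> margin
    by (intro sumPI_le_if_eps_approx_by_less[OF assms(1) _ assms(3)]) (auto intro: order.strict_trans1)
  also have "?c / (1 - 2 * eps) = s / (1 - 2 * eps) + e"
    using margin by (simp add: field_simps)
  finally show "sumPI n S f \<le> ereal (s / (1 - 2 * eps)) + ereal e" by simp
qed

end
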